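(* $\partial^2\,(d')^2=(1-d^2)\,(d^2-\lambda^2)$.
   Context: Let $0<\kappa<1$ and $\lambda=\sqrt{1-\kappa^2}$. Let $F(\tfrac16,\tfrac56;\tfrac12;\cdot)$ denote the Gauss hypergeometric function. Define $u$ as a function of $\phi$ near $0$ by $u=\int_0^{\sin\phi}F(\tfrac16,\tfrac56;\tfrac12;\kappa^2t^2)\,\frac{dt}{\sqrt{1-t^2}}$; near the origin (fixing $0$) this inverts to a holomorphic function $u\mapsto\phi(u)$ with $\phi(0)=0$. Let $\psi$ be the holomorphic function near $0$ with $\psi(0)=0$ and $\sin\psi=\kappa\sin\phi$. Set $d=\cos\psi$ and $\partial=\cos\tfrac23\psi$ (a function, not an operator), as functions of $u$ on a small disc about $0$; primes denote $d/du$. *)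

theory Defs
  imports "HOL-Complex_Analysis.Complex_Analysis"
begin

text \<open>Gauss hypergeometric function F(a,b;c;z) as its power series (meaningful for |z| < 1).\<close>
definition hyp2F1 :: "complex \<Rightarrow> complex \<Rightarrow> complex \<Rightarrow> complex \<Rightarrow> complex" where
  "hyp2F1 a b c z = (\<Sum>n. pochhammer a n * pochhammer b n / (pochhammer c n * fact n) * z ^ n)"

text \<open>u as a function of phi: the integral from 0 to sin phi of
  F(1/6,5/6;1/2;kappa^2 t^2) / sqrt(1 - t^2) dt, taken along the straight segment
  (principal square root; near the origin this is the usual holomorphic integrand).\<close>
definition U_of_phi :: "real \<Rightarrow> complex \<Rightarrow> complex" where
  "U_of_phi \<kappa> \<phi> = contour_integral (linepath 0 (sin \<phi>))
     (\<lambda>t. hyp2F1 (1/6) (5/6) (1/2) ((of_real \<kappa>)\<^sup>2 * t\<^sup>2) / csqrt (1 - t\<^sup>2))"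

end

theory Submission
  imports Defs
begin

text \<open>
  With a = 1/6, the classical evaluation F(a, 1 - a; 1/2; sin^2 w) cos w = cos ((1 - 2a) w)
  (both sides solve f'' = -(1 - 2a)^2 f with the same initial data, by the hypergeometric
  equation) turns the integrand of u at t = sin \<phi> into cos (2\<psi>/3) / (R cos \<psi>), where
  R^2 = cos^2 \<phi>. Differentiating U(\<phi>(u)) = u gives cos (2\<psi>/3) \<phi>' cos \<phi> = R cos \<psi>, and
  differentiating sin \<psi> = \<kappa> sin \<phi> gives \<psi>' cos \<psi> = \<kappa> \<phi>' cos \<phi>. Hence, with d' = -\<psi>' sin \<psi>,
  \<partial>^2 d'^2 = \<kappa>^2 R^2 sin^2 \<psi> = (1 - d^2)(\<kappa>^2 - sin^2 \<psi>) = (1 - d^2)(d^2 - \<lambda>^2).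
  This holds near 0, where sin \<phi> stays inside the unit disc, and extends to the whole disc
  by analytic continuation.
\<close>

definition hyp2F1_coeff :: "complex \<Rightarrow> complex \<Rightarrow> complex \<Rightarrow> nat \<Rightarrow> complex" where
  "hyp2F1_coeff a b c n = pochhammer a n * pochhammer b n / (pochhammer c n * fact n)"

definition hyp2F1_deriv :: "nat \<Rightarrow> complex \<Rightarrow> complex \<Rightarrow> complex \<Rightarrow> complex \<Rightarrow> complex" where
  "hyp2F1_deriv k a b c z = (\<Sum>n. (diffs ^^ k) (hyp2F1_coeff a b c) n * z ^ n)"

lemma hyp2F1_deriv_0 [simp]: "hyp2F1_deriv 0 a b c = hyp2F1 a b c"
  by (simp add: fun_eq_iff hyp2F1_deriv_def hyp2F1_def hyp2F1_coeff_def)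

lemma hyp2F1_0 [simp]: "hyp2F1 a b c 0 = 1"
  unfolding hyp2F1_def powser_zero by simp

text \<open>No side condition is needed: if c + n = 0, both sides are 0 because x / 0 = 0.\<close>

lemma hyp2F1_coeff_Suc:
  "hyp2F1_coeff a b c (Suc n) =
     hyp2F1_coeff a b c n * ((a + of_nat n) * (b + of_nat n) / ((c + of_nat n) * of_nat (Suc n)))"
  by (simp add: hyp2F1_coeff_def pochhammer_Suc divide_inverse mult_ac
      del: of_nat_Suc)

lemma hyp2F1_coeff_ratio_tendsto:
  "(\<lambda>n. (a + of_nat n) * (b + of_nat n) / ((c + of_nat n) * of_nat (Suc n))) \<longlonglongrightarrow> (1::complex)"
proof -
  have "(\<lambda>n. (1 + a / of_nat n) * (1 + b / of_nat n) / ((1 + c / of_nat n) * (1 + 1 / of_nat n)))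
      \<longlonglongrightarrow> (1 + 0) * (1 + 0) / ((1 + 0) * (1 + 0))"
    by (intro tendsto_intros) auto
  moreover have "\<forall>\<^sub>F n in sequentially.
      (1 + a / of_nat n) * (1 + b / of_nat n) / ((1 + c / of_nat n) * (1 + 1 / of_nat n))
      = (a + of_nat n) * (b + of_nat n) / ((c + of_nat n) * of_nat (Suc n))"
    using eventually_gt_at_top[of 0]
  proof eventually_elim
    case (elim n)
    then have "(1 + a / of_nat n) * (1 + b / of_nat n) = (a + of_nat n) * (b + of_nat n) / of_nat n ^ 2"
      and "(1 + c / of_nat n) * (1 + 1 / of_nat n) = (c + of_nat n) * of_nat (Suc n) / of_nat n ^ 2"
      by (simp_all add: field_simps power2_eq_square)
    with elim show ?case by simp
  qed
  ultimately show ?thesis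
    by (simp add: tendsto_cong)
qed

lemma summable_hyp2F1_series:
  assumes "norm z < 1"
  shows "summable (\<lambda>n. hyp2F1_coeff a b c n * z ^ n)"
proof -
  define q where "q n = (a + of_nat n) * (b + of_nat n) / ((c + of_nat n) * of_nat (Suc n))" for n
  define \<theta> where "\<theta> = (1 + norm z) / 2"
  have "(\<lambda>n. norm (q n) * norm z) \<longlonglongrightarrow> norm (1::complex) * norm z"
    unfolding q_def by (intro tendsto_intros hyp2F1_coeff_ratio_tendsto)
  then have "\<forall>\<^sub>F n in sequentially. norm (q n) * norm z < \<theta>"
    by (rule order_tendstoD) (use assms in \<open>simp add: \<theta>_def\<close>)
  then obtain N where N: "\<And>n. n \<ge> N \<Longrightarrow> norm (q n) * norm z < \<theta>"
    by (auto simp: eventually_at_top_linorder)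
  show ?thesis
  proof (rule summable_ratio_test)
    show "\<theta> < 1" using assms by (simp add: \<theta>_def)
    fix n assume "n \<ge> N"
    have "hyp2F1_coeff a b c (Suc n) * z ^ Suc n = q n * z * (hyp2F1_coeff a b c n * z ^ n)"
      by (simp add: hyp2F1_coeff_Suc q_def mult_ac del: of_nat_Suc)
    then have "norm (hyp2F1_coeff a b c (Suc n) * z ^ Suc n)
        = norm (q n) * norm z * norm (hyp2F1_coeff a b c n * z ^ n)"
      by (simp only: norm_mult)
    also have "\<dots> \<le> \<theta> * norm (hyp2F1_coeff a b c n * z ^ n)"
      using N[OF \<open>n \<ge> N\<close>] by (intro mult_right_mono) auto
    finally show "norm (hyp2F1_coeff a b c (Suc n) * z ^ Suc n) \<le> \<theta> * norm (hyp2F1_coeff a b c n * z ^ n)" .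
  qed
qed

lemma summable_hyp2F1_deriv_series:
  assumes "norm z < 1"
  shows "summable (\<lambda>n. (diffs ^^ k) (hyp2F1_coeff a b c) n * z ^ n)"
  using assms
proof (induction k arbitrary: z)
  case 0
  then show ?case by (simp add: summable_hyp2F1_series)
next
  case (Suc k)
  then show ?case by (simp add: termdiff_converges[where K = 1])
qed

lemma has_field_derivative_hyp2F1_deriv:
  assumes "norm z < 1"
  shows "(hyp2F1_deriv k a b c has_field_derivative hyp2F1_deriv (Suc k) a b c z) (at z)"
  unfolding hyp2F1_deriv_def[abs_def] funpow.simps o_apply
  by (rule termdiffs_strong'[where K = 1]) (use assms summable_hyp2F1_deriv_series in auto)

lemma has_field_derivative_hyp2F1_deriv_comp [derivative_intros]:
  assumes "(g has_field_derivative g') (at w within S)" "norm (g w) < 1"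
  shows "((\<lambda>w. hyp2F1_deriv k a b c (g w)) has_field_derivative hyp2F1_deriv (Suc k) a b c (g w) * g')
           (at w within S)"
  using DERIV_chain2[OF has_field_derivative_hyp2F1_deriv[OF assms(2)] assms(1)] .

lemma has_field_derivative_hyp2F1_comp [derivative_intros]:
  assumes "(g has_field_derivative g') (at w within S)" "norm (g w) < 1"
  shows "((\<lambda>w. hyp2F1 a b c (g w)) has_field_derivative hyp2F1_deriv 1 a b c (g w) * g')
           (at w within S)"
  using has_field_derivative_hyp2F1_deriv_comp[OF assms, of 0] by simp

lemma holomorphic_on_hyp2F1 [holomorphic_intros]:
  assumes "g holomorphic_on S" "\<And>w. w \<in> S \<Longrightarrow> norm (g w) < 1"
  shows "(\<lambda>w. hyp2F1 a b c (g w)) holomorphic_on S"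
proof -
  have "hyp2F1 a b c field_differentiable at z" if "norm z < 1" for z
    using has_field_derivative_hyp2F1_deriv[OF that, of 0 a b c]
    by (auto simp: field_differentiable_def)
  then have "hyp2F1 a b c holomorphic_on ball 0 1"
    by (simp add: holomorphic_on_def field_differentiable_at_within)
  moreover have "g ` S \<subseteq> ball 0 1"
    using assms(2) by auto
  ultimately show ?thesis
    using holomorphic_on_compose_gen[OF assms(1)] by (simp add: o_def)
qed

lemma sums_diffs_mult:
  fixes z :: "'a :: real_normed_field"
  assumes "(\<lambda>n. diffs f n * z ^ n) sums S"
  shows "(\<lambda>n. of_nat n * f n * z ^ n) sums (z * S)"
proof -
  have "(\<lambda>n. of_nat (Suc n) * f (Suc n) * z ^ Suc n) sums (z * S)"
    using sums_mult[OF assms, of z] by (simp add: diffs_def mult_ac)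
  then show ?thesis
    using sums_Suc_iff[where f = "\<lambda>n. of_nat n * f n * z ^ n"] by simp
qed

lemma hyp2F1_ode:
  assumes "c \<notin> \<int>\<^sub>\<le>\<^sub>0" "norm z < 1"
  shows "z * (1 - z) * hyp2F1_deriv 2 a b c z + (c - (a + b + 1) * z) * hyp2F1_deriv 1 a b c z
           - a * b * hyp2F1 a b c z = 0"
proof -
  define A where "A = hyp2F1_coeff a b c"
  define F where "F k = hyp2F1_deriv k a b c z" for k
  have sums_F: "(\<lambda>n. (diffs ^^ k) A n * z ^ n) sums F k" for k
    unfolding A_def F_def hyp2F1_deriv_def by (intro summable_sums summable_hyp2F1_deriv_series assms)
  have "(\<lambda>n. diffs A n * z ^ n) sums F 1"
    using sums_F[of 1] by simp
  then have zF1: "(\<lambda>n. of_nat n * A n * z ^ n) sums (z * F 1)"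
    by (rule sums_diffs_mult)
  have "(\<lambda>n. diffs (diffs A) n * z ^ n) sums F 2"
    using sums_F[of 2] by (simp add: numeral_2_eq_2)
  then have zF2: "(\<lambda>n. of_nat n * diffs A n * z ^ n) sums (z * F 2)"
    by (rule sums_diffs_mult)
  then have "(\<lambda>n. diffs (\<lambda>m. (of_nat m - 1) * A m) n * z ^ n) sums (z * F 2)"
    by (simp add: diffs_def mult_ac)
  then have zzF2: "(\<lambda>n. of_nat n * ((of_nat n - 1) * A n) * z ^ n) sums (z * (z * F 2))"
    by (rule sums_diffs_mult)
  have recurrence: "(c + of_nat n) * diffs A n = (a + of_nat n) * (b + of_nat n) * A n" for n
  proof -
    have "c + of_nat n \<noteq> 0"
      using assms(1) minus_of_nat_in_nonpos_Ints[of n] by (auto simp: add_eq_0_iff2)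
    then show ?thesis
      by (simp add: diffs_def A_def hyp2F1_coeff_Suc del: of_nat_Suc)
  qed
  have "(\<lambda>n. of_nat n * diffs A n * z ^ n - of_nat n * ((of_nat n - 1) * A n) * z ^ n
         + c * (diffs A n * z ^ n) - (a + b + 1) * (of_nat n * A n * z ^ n) - a * b * (A n * z ^ n))
        sums (z * F 2 - z * (z * F 2) + c * F 1 - (a + b + 1) * (z * F 1) - a * b * F 0)"
    (is "(\<lambda>n. ?t n) sums ?S")
    using sums_F[of 0] sums_F[of 1] by (intro sums_diff sums_add sums_mult zF1 zF2 zzF2) simp_all
  moreover have "?t n = z ^ n * ((c + of_nat n) * diffs A n - (a + of_nat n) * (b + of_nat n) * A n)"
    for n by (simp add: algebra_simps)
  ultimately have "(\<lambda>n. 0) sums ?S"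
    by (simp add: recurrence)
  then have "?S = 0"
    using sums_unique2 sums_zero by blast
  then show ?thesis
    by (simp add: F_def algebra_simps)
qed

text \<open>
  Since f'' + \<omega>^2 f = (D + i\<omega>)(D - i\<omega>) f, the integrating factors exp (\<mp>i\<omega>w) kill the two
  first-order factors in turn.
\<close>

lemma oscillator_solution_eq_0:
  fixes f f' :: "complex \<Rightarrow> complex"
  assumes "convex S" "z\<^sub>0 \<in> S" "w \<in> S"
    and f: "\<And>w. w \<in> S \<Longrightarrow> (f has_field_derivative f' w) (at w within S)"
    and f': "\<And>w. w \<in> S \<Longrightarrow> (f' has_field_derivative - (\<omega>\<^sup>2 * f w)) (at w within S)"
    and "f z\<^sub>0 = 0" "f' z\<^sub>0 = 0"
  shows "f w = 0"
proof -
  have "\<exists>k. \<forall>v\<in>S. (f' v + \<i> * \<omega> * f v) * exp (- \<i> * \<omega> * v) = k"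
  proof (rule has_field_derivative_zero_constant[OF \<open>convex S\<close>])
    fix v assume "v \<in> S"
    show "((\<lambda>v. (f' v + \<i> * \<omega> * f v) * exp (- \<i> * \<omega> * v)) has_field_derivative 0) (at v within S)"
      by (rule derivative_eq_intros f f' \<open>v \<in> S\<close> refl)+ (simp add: algebra_simps power2_eq_square)
  qed
  then obtain k where k: "\<And>v. v \<in> S \<Longrightarrow> (f' v + \<i> * \<omega> * f v) * exp (- \<i> * \<omega> * v) = k"
    by blast
  have "k = 0"
    using k[OF \<open>z\<^sub>0 \<in> S\<close>] assms(6,7) by simp
  have f'_eq: "f' v = - \<i> * \<omega> * f v" if "v \<in> S" for v
  proof -
    have "f' v + \<i> * \<omega> * f v = 0"
      using k[OF that] \<open>k = 0\<close> by simp
    then show ?thesis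
      by (simp add: eq_neg_iff_add_eq_0)
  qed
  have "\<exists>k. \<forall>v\<in>S. f v * exp (\<i> * \<omega> * v) = k"
  proof (rule has_field_derivative_zero_constant[OF \<open>convex S\<close>])
    fix v assume "v \<in> S"
    show "((\<lambda>v. f v * exp (\<i> * \<omega> * v)) has_field_derivative 0) (at v within S)"
      by (rule derivative_eq_intros f \<open>v \<in> S\<close> refl)+ (simp add: f'_eq[OF \<open>v \<in> S\<close>] algebra_simps)
  qed
  then obtain k' where "\<And>v. v \<in> S \<Longrightarrow> f v * exp (\<i> * \<omega> * v) = k'"
    by blast
  with assms(2,3,6) show ?thesis
    by (metis exp_not_eq_zero mult_eq_0_iff)
qed

lemma hyp2F1_sin_squared_times_cos:
  "\<forall>\<^sub>F w in nhds 0. hyp2F1 a (1 - a) (1/2) (sin w ^ 2) * cos w = cos ((1 - 2 * a) * w)"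
proof -
  have "open {w::complex. norm (sin w ^ 2) < 1}"
    by (intro open_Collect_less continuous_intros)
  then obtain \<rho> where "\<rho> > 0" and small: "\<And>w::complex. w \<in> ball 0 \<rho> \<Longrightarrow> norm (sin w ^ 2) < 1"
    by (rule openE[of _ 0]) (auto simp: subset_eq)
  define \<omega> where "\<omega> = 1 - 2 * a"
  define F where "F k w = hyp2F1_deriv k a (1 - a) (1/2) (sin w ^ 2)" for k w
  define f where "f w = hyp2F1 a (1 - a) (1/2) (sin w ^ 2) * cos w - cos (\<omega> * w)" for w
  define f' where "f' w = 2 * sin w * cos w ^ 2 * F 1 w - sin w * F 0 w + \<omega> * sin (\<omega> * w)" for w
  have "f w = 0" if "w \<in> ball 0 \<rho>" for w
  proof (rule oscillator_solution_eq_0[where S = "ball 0 \<rho>" and z\<^sub>0 = 0 and f = f and f' = f' and \<omega> = \<omega>])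
    fix v :: complex assume v: "v \<in> ball 0 \<rho>"
    show "(f has_field_derivative f' v) (at v within ball 0 \<rho>)"
      unfolding f_def[abs_def] f'_def F_def
      by (rule derivative_eq_intros refl small[OF v])+ (simp add: algebra_simps power2_eq_square)
    have "(1/2 :: complex) \<notin> \<int>\<^sub>\<le>\<^sub>0"
      by auto
    from hyp2F1_ode[OF this small[OF v], of a "1 - a"]
    have ode: "sin v ^ 2 * (1 - sin v ^ 2) * F 2 v + (1/2 - 2 * sin v ^ 2) * F 1 v - a * (1 - a) * F 0 v = 0"
      by (simp add: F_def)
    show "(f' has_field_derivative - (\<omega>\<^sup>2 * f v)) (at v within ball 0 \<rho>)"
      unfolding f_def f'_def[abs_def] F_def
      by (rule derivative_eq_intros refl small[OF v])+
         (use ode sin_cos_squared_add[of v] in \<open>(simp add: F_def \<omega>_def numeral_2_eq_2), algebra\<close>)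
  qed (use \<open>\<rho> > 0\<close> that in \<open>auto simp: f_def f'_def\<close>)
  then show ?thesis
    using eventually_nhds_ball[OF \<open>\<rho> > 0\<close>, of 0] by (auto elim!: eventually_mono simp: f_def \<omega>_def)
qed

lemma has_field_derivative_linepath_integral:
  assumes "f holomorphic_on S" "open S" "convex S" "a \<in> S" "z \<in> S"
  shows "((\<lambda>z. contour_integral (linepath a z) f) has_field_derivative f z) (at z)"
proof (rule triangle_contour_integrals_starlike_primitive[OF _ \<open>a \<in> S\<close> \<open>open S\<close> \<open>z \<in> S\<close>])
  show "continuous_on S f"
    using assms(1) by (rule holomorphic_on_imp_continuous_on)
  show "closed_segment a y \<subseteq> S" if "y \<in> S" for y
    using assms(3,4) that by (rule convex_contains_segment[THEN iffD1, rule_format])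
  fix b c assume "closed_segment b c \<subseteq> S"
  then have "convex hull {a, b, c} \<subseteq> S"
    using assms(3,4) by (intro hull_minimal) auto
  then have "f holomorphic_on convex hull {a, b, c}"
    using assms(1) by (rule holomorphic_on_subset[rotated])
  then show "contour_integral (linepath a b) f + contour_integral (linepath b c) f +
      contour_integral (linepath c a) f = 0"
    by (rule has_chain_integral_chain_integral3[OF Cauchy_theorem_triangle])
qed

definition elliptic_integrand :: "real \<Rightarrow> complex \<Rightarrow> complex" where
  "elliptic_integrand \<kappa> t = hyp2F1 (1/6) (5/6) (1/2) ((of_real \<kappa>)\<^sup>2 * t\<^sup>2) / csqrt (1 - t\<^sup>2)"

lemma U_of_phi_altdef: "U_of_phi \<kappa> \<phi> = contour_integral (linepath 0 (sin \<phi>)) (elliptic_integrand \<kappa>)"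
  by (simp add: U_of_phi_def elliptic_integrand_def[abs_def])

lemma holomorphic_on_elliptic_integrand:
  assumes "\<bar>\<kappa>\<bar> \<le> 1"
  shows "elliptic_integrand \<kappa> holomorphic_on ball 0 1"
  unfolding elliptic_integrand_def[abs_def]
proof (intro holomorphic_intros)
  fix t :: complex assume "t \<in> ball 0 1"
  then have t: "norm t < 1" by simp
  have "norm ((of_real \<kappa>)\<^sup>2 * t\<^sup>2) = \<kappa>\<^sup>2 * norm t ^ 2"
    by (simp add: norm_mult norm_power)
  also have "\<dots> \<le> norm t ^ 2"
    using assms by (intro mult_left_le_one_le) (auto simp: abs_square_le_1)
  also have "\<dots> < 1"
    using t by (simp add: power_less_one_iff)
  finally show "norm ((of_real \<kappa>)\<^sup>2 * t\<^sup>2) < 1" .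
  show "1 - t\<^sup>2 \<notin> \<real>\<^sub>\<le>\<^sub>0"
    using t abs_Re_le_cmod[of t] by (intro one_minus_z2_notin_nonpos_Reals) linarith
  then show "csqrt (1 - t\<^sup>2) \<noteq> 0"
    by auto
qed

lemma U_of_phi_inverse_deriv:
  assumes "\<bar>\<kappa>\<bar> \<le> 1" "\<phi> holomorphic_on S" "open S" "u \<in> S"
    and inverse: "\<And>v. v \<in> S \<Longrightarrow> U_of_phi \<kappa> (\<phi> v) = v"
    and "norm (sin (\<phi> u)) < 1"
  shows "elliptic_integrand \<kappa> (sin (\<phi> u)) * (cos (\<phi> u) * deriv \<phi> u) = 1"
proof -
  define V where "V s = contour_integral (linepath 0 s) (elliptic_integrand \<kappa>)" for s
  have "(V has_field_derivative elliptic_integrand \<kappa> (sin (\<phi> u))) (at (sin (\<phi> u)))"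
    unfolding V_def using holomorphic_on_elliptic_integrand[OF assms(1)] assms(6)
    by (intro has_field_derivative_linepath_integral) auto
  moreover have "((\<lambda>v. sin (\<phi> v)) has_field_derivative cos (\<phi> u) * deriv \<phi> u) (at u)"
    using holomorphic_derivI[OF assms(2,3,4)] by (rule DERIV_chain2[OF DERIV_sin])
  ultimately have "((\<lambda>v. V (sin (\<phi> v))) has_field_derivative
      elliptic_integrand \<kappa> (sin (\<phi> u)) * (cos (\<phi> u) * deriv \<phi> u)) (at u)"
    by (rule DERIV_chain2)
  moreover have "((\<lambda>v. V (sin (\<phi> v))) has_field_derivative 1) (at u)"
    by (rule has_field_derivative_transform_within_open[OF DERIV_ident \<open>open S\<close> \<open>u \<in> S\<close>])
       (simp add: V_def inverse flip: U_of_phi_altdef)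
  ultimately show ?thesis
    by (rule DERIV_unique)
qed

lemma tendsto_nhds_holomorphic:
  assumes "f holomorphic_on S" "open S" "z \<in> S"
  shows "filterlim f (nhds (f z)) (nhds z)"
  using holomorphic_on_imp_continuous_on[OF assms(1)] assms(2,3)
  by (simp add: continuous_on_eq_continuous_at isCont_def tendsto_at_iff_tendsto_nhds)

lemma cos_psi_identity_algebraic:
  fixes H R k s\<^sub>\<phi> c\<^sub>\<phi> s\<^sub>\<psi> c\<^sub>\<psi> \<phi>' \<psi>' :: complex
  assumes "H * c\<^sub>\<phi> * \<phi>' = R" "R\<^sup>2 = 1 - s\<^sub>\<phi>\<^sup>2"
    and "c\<^sub>\<psi> * \<psi>' = k * (c\<^sub>\<phi> * \<phi>')" "s\<^sub>\<psi> = k * s\<^sub>\<phi>" "s\<^sub>\<psi>\<^sup>2 + c\<^sub>\<psi>\<^sup>2 = 1"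
  shows "(H * c\<^sub>\<psi>)\<^sup>2 * (- s\<^sub>\<psi> * \<psi>')\<^sup>2 = (1 - c\<^sub>\<psi>\<^sup>2) * (c\<^sub>\<psi>\<^sup>2 - (1 - k\<^sup>2))"
proof -
  have "(H * c\<^sub>\<psi>)\<^sup>2 * (- s\<^sub>\<psi> * \<psi>')\<^sup>2 = s\<^sub>\<psi>\<^sup>2 * (H * (c\<^sub>\<psi> * \<psi>'))\<^sup>2"
    by (simp add: power_mult_distrib)
  also have "\<dots> = s\<^sub>\<psi>\<^sup>2 * k\<^sup>2 * (H * c\<^sub>\<phi> * \<phi>')\<^sup>2"
    unfolding assms(3) by (simp add: power_mult_distrib)
  also have "\<dots> = s\<^sub>\<psi>\<^sup>2 * k\<^sup>2 * (1 - s\<^sub>\<phi>\<^sup>2)"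
    using assms(1,2) by simp
  also have "\<dots> = (1 - c\<^sub>\<psi>\<^sup>2) * (c\<^sub>\<psi>\<^sup>2 - (1 - k\<^sup>2))"
  proof -
    have "c\<^sub>\<psi>\<^sup>2 = 1 - k\<^sup>2 * s\<^sub>\<phi>\<^sup>2"
      using assms(4,5) by (simp add: power_mult_distrib eq_diff_eq add.commute)
    then show ?thesis
      unfolding assms(4) by algebra
  qed
  finally show ?thesis .
qed

lemma cos_psi_identity_near_0:
  fixes \<kappa> :: real and \<phi> \<psi> :: "complex \<Rightarrow> complex"
  assumes "\<bar>\<kappa>\<bar> \<le> 1" "open S" "0 \<in> S"
    and \<phi>: "\<phi> holomorphic_on S" "\<phi> 0 = 0" "\<And>u. u \<in> S \<Longrightarrow> U_of_phi \<kappa> (\<phi> u) = u"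
    and \<psi>: "\<psi> holomorphic_on S" "\<psi> 0 = 0" "\<And>u. u \<in> S \<Longrightarrow> sin (\<psi> u) = of_real \<kappa> * sin (\<phi> u)"
  shows "\<forall>\<^sub>F u in nhds 0. (cos (2/3 * \<psi> u))\<^sup>2 * (deriv (\<lambda>v. cos (\<psi> v)) u)\<^sup>2
           = (1 - (cos (\<psi> u))\<^sup>2) * ((cos (\<psi> u))\<^sup>2 - (1 - (of_real \<kappa>)\<^sup>2))"
proof -
  have "\<forall>\<^sub>F u in nhds 0. u \<in> S"
    using assms(2,3) by (rule eventually_nhds_in_open)
  moreover have "((\<lambda>u. norm (sin (\<phi> u))) \<longlongrightarrow> norm (sin (\<phi> 0))) (nhds 0)"
    by (intro tendsto_intros tendsto_nhds_holomorphic[OF \<phi>(1) assms(2,3)])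
  then have "\<forall>\<^sub>F u in nhds 0. norm (sin (\<phi> u)) < 1"
    by (rule order_tendstoD) (simp add: \<phi>(2))
  moreover have "\<forall>\<^sub>F u in nhds 0. hyp2F1 (1/6) (5/6) (1/2) (sin (\<psi> u) ^ 2) * cos (\<psi> u) = cos (2/3 * \<psi> u)"
    using eventually_compose_filterlim[OF hyp2F1_sin_squared_times_cos[of "1/6"]
        tendsto_nhds_holomorphic[OF \<psi>(1) assms(2,3), unfolded \<psi>(2)]]
    by simp
  ultimately show ?thesis
  proof eventually_elim
    case (elim u)
    then have u: "u \<in> S" "norm (sin (\<phi> u)) < 1"
      and H: "hyp2F1 (1/6) (5/6) (1/2) (sin (\<psi> u) ^ 2) * cos (\<psi> u) = cos (2/3 * \<psi> u)"
      by blast+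
    have \<phi>': "elliptic_integrand \<kappa> (sin (\<phi> u)) * (cos (\<phi> u) * deriv \<phi> u) = 1"
      using U_of_phi_inverse_deriv[OF assms(1) \<phi>(1) assms(2) u(1) \<phi>(3) u(2)] .
    have d\<psi>: "(\<psi> has_field_derivative deriv \<psi> u) (at u)"
      by (rule holomorphic_derivI[OF \<psi>(1) assms(2) u(1)])
    have "((\<lambda>v. sin (\<psi> v)) has_field_derivative cos (\<psi> u) * deriv \<psi> u) (at u)"
      using d\<psi> by (rule DERIV_chain2[OF DERIV_sin])
    moreover have "((\<lambda>v. sin (\<psi> v)) has_field_derivative of_real \<kappa> * (cos (\<phi> u) * deriv \<phi> u)) (at u)"
      by (rule has_field_derivative_transform_within_open[OF _ assms(2) u(1)])
         (use holomorphic_derivI[OF \<phi>(1) assms(2) u(1)] \<psi>(3) in \<open>auto intro!: derivative_eq_intros\<close>)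
    ultimately have \<psi>': "cos (\<psi> u) * deriv \<psi> u = of_real \<kappa> * (cos (\<phi> u) * deriv \<phi> u)"
      by (rule DERIV_unique)
    have dcos: "deriv (\<lambda>v. cos (\<psi> v)) u = - sin (\<psi> u) * deriv \<psi> u"
      using d\<psi> by (intro DERIV_imp_deriv DERIV_chain2[OF DERIV_cos])
    have R: "hyp2F1 (1/6) (5/6) (1/2) (sin (\<psi> u) ^ 2) * cos (\<phi> u) * deriv \<phi> u
        = csqrt (1 - sin (\<phi> u) ^ 2)"
      using \<phi>' by (auto simp: elliptic_integrand_def \<psi>(3)[OF u(1)] power_mult_distrib field_simps)
    show ?case
      unfolding H[symmetric] dcos
      by (rule cos_psi_identity_algebraic[OF R _ \<psi>' \<psi>(3)[OF u(1)] sin_cos_squared_add]) simp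
  qed
qed

theorem theorem4:
  fixes \<kappa> r :: real and \<phi> \<psi> :: "complex \<Rightarrow> complex"
  assumes "0 < \<kappa>" and "\<kappa> < 1"
    and "0 < r"
    and "\<phi> holomorphic_on ball 0 r" and "\<phi> 0 = 0"
    and "\<And>u. u \<in> ball 0 r \<Longrightarrow> U_of_phi \<kappa> (\<phi> u) = u"
    and "\<psi> holomorphic_on ball 0 r" and "\<psi> 0 = 0"
    and "\<And>u. u \<in> ball 0 r \<Longrightarrow> sin (\<psi> u) = of_real \<kappa> * sin (\<phi> u)"
  shows "\<forall>u \<in> ball 0 r.
    (cos (2/3 * \<psi> u))\<^sup>2 * (deriv (\<lambda>v. cos (\<psi> v)) u)\<^sup>2
      = (1 - (cos (\<psi> u))\<^sup>2) * ((cos (\<psi> u))\<^sup>2 - (of_real (sqrt (1 - \<kappa>\<^sup>2)))\<^sup>2)"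
proof
  fix u :: complex assume u: "u \<in> ball 0 r"
  define L where "L v = (cos (2/3 * \<psi> v))\<^sup>2 * (deriv (\<lambda>w. cos (\<psi> w)) v)\<^sup>2" for v
  define R where "R v = (1 - (cos (\<psi> v))\<^sup>2) * ((cos (\<psi> v))\<^sup>2 - (1 - (of_real \<kappa>)\<^sup>2))" for v
  have "\<bar>\<kappa>\<bar> \<le> 1" and "\<kappa>\<^sup>2 \<le> 1"
    using assms(1,2) by (simp_all add: abs_square_le_1)
  then have \<lambda>: "(of_real (sqrt (1 - \<kappa>\<^sup>2)))\<^sup>2 = 1 - (of_real \<kappa>)\<^sup>2"
    by (simp flip: of_real_power)
  have "\<forall>\<^sub>F v in nhds 0. L v = R v"
    unfolding L_def R_def using assms(3)
    by (intro cos_psi_identity_near_0[OF \<open>\<bar>\<kappa>\<bar> \<le> 1\<close> _ _ assms(4-9)]) auto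
  then obtain T where T: "open T" "0 \<in> T" "\<And>v. v \<in> T \<Longrightarrow> L v = R v"
    unfolding eventually_nhds by blast
  have "deriv (\<lambda>v. cos (\<psi> v)) holomorphic_on ball 0 r"
    using assms(7) by (intro holomorphic_deriv holomorphic_intros) auto
  then have "L holomorphic_on ball 0 r" "R holomorphic_on ball 0 r"
    using assms(7) unfolding L_def[abs_def] R_def[abs_def] by (auto intro!: holomorphic_intros)
  moreover have "0 \<in> T \<inter> ball 0 r"
    using T(2) assms(3) by simp
  ultimately have "L u = R u"
    using analytic_continuation_open[of "T \<inter> ball 0 r" "ball 0 r" L R u] T u by blast
  then show "(cos (2/3 * \<psi> u))\<^sup>2 * (deriv (\<lambda>v. cos (\<psi> v)) u)\<^sup>2
      = (1 - (cos (\<psi> u))\<^sup>2) * ((cos (\<psi> u))\<^sup>2 - (of_real (sqrt (1 - \<kappa>\<^sup>2)))\<^sup>2)"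
    unfolding L_def R_def \<lambda> .
qed

end
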